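(* Let $\gamma>\frac{4}{\sqrt n}$ and $B>\gamma\sqrt n$. For every input stream $a\in\{-1,0,1\}^n$, the output of algorithm $\mathsf{Apr}$ (with parameters $\gamma,B$) satisfies, with probability at least $1-\frac{1}{n^3}$ over its private randomness $r$, $$\Big|\mathsf{Apr}(a,r)-\sum_{j=1}^n a_j\Big|\le\frac{\gamma}{2}\sqrt n .$$ Consequently, for every distribution $\mathcal D$ on $\{-1,0,1\}^n$, $\mathbb E_{a\sim\mathcal D,r}\big[(\mathsf{Apr}(a,r)-\sum_{j=1}^n a_j)^2\big]\le\gamma^2 n$.
   Context: Algorithm $\mathsf{Apr}$ (logs base 2): set $p=\min\{6000\log^2 n\cdot\frac{B}{\gamma^2 n},1\}$ and counters $\Delta=\zeta=\Gamma=0$. For $j=1,\dots,n$: if $\zeta<20\log n\cdot pB$, draw an independent bit $r_j$ equal to $1$ with probability $p$, and if $r_j=1$ set $\Delta\leftarrow\Delta+a_j$ and $\zeta\leftarrow\zeta+\mathbb 1_{a_j\ne0}$; otherwise (if $\zeta\ge20\log n\cdot pB$) set $\Gamma\leftarrow\Gamma+a_j$. Output $\max\{\min\{\Delta/p+\Gamma,n\},-n\}$. *)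

theory Defs
  imports "HOL-Probability.Probability"
begin

text \<open>Streams are integer lists of length n (list index j
corresponds to a_{j+1}); the private randomness is a function r :: nat => bool
whose value r j is the coin r_{j+1}; it is only consulted while the algorithm
is in sampling mode.\<close>

definition apr_p :: "real \<Rightarrow> real \<Rightarrow> nat \<Rightarrow> real" where
  "apr_p \<gamma> B n = min (6000 * (log 2 (real n))^2 * B / (\<gamma>^2 * real n)) 1"

definition apr_step :: "real \<Rightarrow> real \<Rightarrow> nat \<Rightarrow> int \<Rightarrow> bool \<Rightarrow>
    real \<times> real \<times> real \<Rightarrow> real \<times> real \<times> real" where
  "apr_step \<gamma> B n aj rj st =
     (case st of (\<Delta>, \<zeta>, \<Gamma>) \<Rightarrow>
        if \<zeta> < 20 * log 2 (real n) * apr_p \<gamma> B n * B then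
          (if rj then (\<Delta> + real_of_int aj, \<zeta> + (if aj \<noteq> 0 then 1 else 0), \<Gamma>)
           else (\<Delta>, \<zeta>, \<Gamma>))
        else (\<Delta>, \<zeta>, \<Gamma> + real_of_int aj))"

definition apr_state :: "real \<Rightarrow> real \<Rightarrow> nat \<Rightarrow> int list \<Rightarrow> (nat \<Rightarrow> bool) \<Rightarrow> real \<times> real \<times> real" where
  "apr_state \<gamma> B n a r =
     foldl (\<lambda>st j. apr_step \<gamma> B n (a ! j) (r j) st) (0, 0, 0) [0..<n]"

definition apr :: "real \<Rightarrow> real \<Rightarrow> nat \<Rightarrow> int list \<Rightarrow> (nat \<Rightarrow> bool) \<Rightarrow> real" where
  "apr \<gamma> B n a r =
     (case apr_state \<gamma> B n a r of (\<Delta>, \<zeta>, \<Gamma>) \<Rightarrow>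
        max (min (\<Delta> / apr_p \<gamma> B n + \<Gamma>) (real n)) (- real n))"

definition apr_coins :: "real \<Rightarrow> real \<Rightarrow> nat \<Rightarrow> (nat \<Rightarrow> bool) pmf" where
  "apr_coins \<gamma> B n = Pi_pmf {..<n} False (\<lambda>_. bernoulli_pmf (apr_p \<gamma> B n))"

end

theory Submission
  imports Defs
begin

text \<open>Before clamping, Apr errs by \<open>(1/p) * (\<Sum>i<k. a\<^sub>i * (r\<^sub>i - p))\<close>, where \<open>{..<k}\<close> is the
prefix of the stream on which it samples; the prefix ends once the number of sampled nonzero
entries reaches \<open>T = 20 * log n * p * B\<close>. The centred Bernoulli moment generating function is
at most \<open>exp (p * s\<^sup>2)\<close> for \<open>\<bar>s\<bar> \<le> 1\<close>, which gives a variance-sensitive Chernoff bound. For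
a fixed prefix with \<open>N\<close> nonzero entries: if \<open>N \<le> 50 * log n * B\<close>, the weighted sum exceeds
\<open>p * \<gamma> * sqrt n / 2\<close> with probability at most \<open>2 * n\<^sup>-\<^sup>6\<close>; otherwise the count has mean
\<open>p * N\<close> far above \<open>T\<close> and stays below \<open>T + 1\<close> with probability at most \<open>n\<^sup>-\<^sup>6\<close>. A union
bound over the \<open>n\<close> prefixes gives failure probability \<open>n\<^sup>-\<^sup>3\<close>. Clamping to \<open>[-n, n]\<close> does
not increase the error and bounds it by \<open>2 * n\<close>, so the mean square error is at most
\<open>\<gamma>\<^sup>2 * n / 4 + 4 * n\<^sup>2 / n\<^sup>3 \<le> \<gamma>\<^sup>2 * n\<close>.\<close>

section \<open>Chernoff bounds for weighted Bernoulli sums\<close>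

lemma exp_le_one_plus_self_plus_square:
  fixes x :: real
  assumes "\<bar>x\<bar> \<le> 1"
  shows "exp x \<le> 1 + x + x^2"
proof (cases "0 \<le> x")
  case True
  then show ?thesis using exp_bound[of x] assms by simp
next
  case False
  define y where "y = - x"
  have y: "0 \<le> y" "y \<le> 1" using False assms by (auto simp: y_def)
  have "1 \<le> 1 + y^2/2 + y^3/2 + y^4/2" using y by simp
  also have "\<dots> = (1 - y + y^2) * (1 + y + y^2/2)"
    by (simp add: field_simps power2_eq_square power3_eq_cube power4_eq_xxxx)
  also have "\<dots> \<le> (1 - y + y^2) * exp y"
  proof (rule mult_left_mono)
    show "1 + y + y^2/2 \<le> exp y" using exp_lower_Taylor_quadratic y by simp
    show "0 \<le> 1 - y + y^2" using y by (simp add: power2_eq_square mult_le_one)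
  qed
  finally have "exp (- y) \<le> 1 - y + y^2" by (simp add: exp_minus field_simps)
  then show ?thesis by (simp add: y_def)
qed

lemma bernoulli_centered_mgf_le:
  fixes p s :: real
  assumes "0 \<le> p" "p \<le> 1" "\<bar>s\<bar> \<le> 1"
  shows "measure_pmf.expectation (bernoulli_pmf p) (\<lambda>b. exp (s * (of_bool b - p))) \<le> exp (p * s^2)"
proof -
  have "measure_pmf.expectation (bernoulli_pmf p) (\<lambda>b. exp (s * (of_bool b - p)))
      = exp (- (s * p)) * (1 + p * (exp s - 1))"
    using assms by (simp add: algebra_simps exp_diff exp_minus field_simps)
  also have "\<dots> \<le> exp (- (s * p)) * exp (p * (exp s - 1))"
    using exp_ge_add_one_self[of "p * (exp s - 1)"] by (intro mult_left_mono) auto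
  also have "\<dots> = exp (p * (exp s - 1 - s))" by (simp add: exp_add[symmetric] algebra_simps)
  also have "\<dots> \<le> exp (p * s^2)"
    using exp_le_one_plus_self_plus_square[OF assms(3)] assms by (intro exp_mono mult_left_mono) auto
  finally show ?thesis .
qed

lemma finite_set_pmf_Pi_pmf_bool:
  "finite I \<Longrightarrow> finite (set_pmf (Pi_pmf I dflt (q :: 'i \<Rightarrow> bool pmf)))"
  by (subst set_Pi_pmf) (auto intro!: finite_PiE_dflt)

lemma Pi_pmf_bernoulli_weighted_sum_mgf_le:
  fixes c :: "'i \<Rightarrow> real"
  assumes I: "finite I" "J \<subseteq> I" and p: "0 \<le> p" "p \<le> 1" and c: "\<And>i. i \<in> J \<Longrightarrow> \<bar>c i\<bar> \<le> 1"
  shows "measure_pmf.expectation (Pi_pmf I dflt (\<lambda>_. bernoulli_pmf p))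
           (\<lambda>r. exp (\<Sum>i\<in>J. c i * (of_bool (r i) - p)))
         \<le> exp (p * (\<Sum>i\<in>J. (c i)^2))"
proof -
  define f where "f i b = (if i \<in> J then exp (c i * (of_bool b - p)) else 1)" for i b
  have "(\<lambda>r. exp (\<Sum>i\<in>J. c i * (of_bool (r i) - p))) = (\<lambda>r. \<Prod>i\<in>I. f i (r i))"
    using I finite_subset[OF I(2,1)]
    by (simp add: fun_eq_iff exp_sum f_def prod.inter_restrict[symmetric] Int_absorb1)
  then have "measure_pmf.expectation (Pi_pmf I dflt (\<lambda>_. bernoulli_pmf p))
      (\<lambda>r. exp (\<Sum>i\<in>J. c i * (of_bool (r i) - p)))
      = (\<Prod>i\<in>I. measure_pmf.expectation (bernoulli_pmf p) (f i))"
    by (simp only:) (rule expectation_prod_Pi_pmf, auto simp: f_def I intro!: integrable_measure_pmf_finite)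
  also have "\<dots> \<le> (\<Prod>i\<in>I. exp (if i \<in> J then p * (c i)^2 else 0))"
  proof (rule prod_mono, rule conjI)
    fix i
    show "0 \<le> measure_pmf.expectation (bernoulli_pmf p) (f i)"
      by (rule integral_nonneg_AE) (simp add: f_def)
    show "measure_pmf.expectation (bernoulli_pmf p) (f i) \<le> exp (if i \<in> J then p * (c i)^2 else 0)"
    proof (cases "i \<in> J")
      case True
      then have "f i = (\<lambda>b. exp (c i * (of_bool b - p)))" by (simp add: f_def fun_eq_iff)
      then show ?thesis using bernoulli_centered_mgf_le[OF p c[OF True]] True by simp
    qed (use p in \<open>simp add: f_def\<close>)
  qed
  also have "\<dots> = exp (p * (\<Sum>i\<in>J. (c i)^2))"
    using I by (simp add: exp_sum[symmetric] sum.inter_restrict[symmetric] Int_absorb1 sum_distrib_left)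
  finally show ?thesis .
qed

lemma Pi_pmf_bernoulli_weighted_sum_tail:
  fixes c :: "'i \<Rightarrow> real"
  assumes I: "finite I" "J \<subseteq> I" and p: "0 \<le> p" "p \<le> 1" and l: "0 < l" "l \<le> 1"
    and c: "\<And>i. i \<in> J \<Longrightarrow> \<bar>c i\<bar> \<le> 1"
  shows "measure_pmf.prob (Pi_pmf I dflt (\<lambda>_. bernoulli_pmf p))
           {r. u \<le> (\<Sum>i\<in>J. c i * (of_bool (r i) - p))}
         \<le> exp (- l * u + l^2 * p * (\<Sum>i\<in>J. (c i)^2))"
proof -
  define M where "M = Pi_pmf I dflt (\<lambda>_. bernoulli_pmf p)"
  define X where "X r = (\<Sum>i\<in>J. c i * (of_bool (r i) - p))" for r :: "'i \<Rightarrow> bool"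
  have "measure_pmf.prob M {r. u \<le> X r} \<le> exp (- l * u) * measure_pmf.expectation M (\<lambda>r. exp (l * X r))"
    using measure_pmf.Chernoff_ineq_ge[of l M UNIV X u] l
    by (simp add: set_integrable_def set_lebesgue_integral_def M_def
        integrable_measure_pmf_finite finite_set_pmf_Pi_pmf_bool I)
  also have "(\<lambda>r. exp (l * X r)) = (\<lambda>r. exp (\<Sum>i\<in>J. (l * c i) * (of_bool (r i) - p)))"
    by (simp add: X_def sum_distrib_left mult.assoc)
  also have "measure_pmf.expectation M \<dots> \<le> exp (p * (\<Sum>i\<in>J. (l * c i)^2))"
    unfolding M_def using c l
    by (intro Pi_pmf_bernoulli_weighted_sum_mgf_le I p) (simp add: abs_mult mult_le_one)
  also have "\<dots> = exp (l^2 * p * (\<Sum>i\<in>J. (c i)^2))"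
    by (simp add: power_mult_distrib sum_distrib_left mult_ac)
  finally show ?thesis
    by (simp add: M_def X_def exp_add[symmetric] mult_left_mono)
qed

lemma Pi_pmf_bernoulli_weighted_sum_abs_tail:
  fixes c :: "'i \<Rightarrow> real"
  assumes "finite I" "J \<subseteq> I" "0 \<le> p" "p \<le> 1" "0 < l" "l \<le> 1"
    and "\<And>i. i \<in> J \<Longrightarrow> \<bar>c i\<bar> \<le> 1"
  shows "measure_pmf.prob (Pi_pmf I dflt (\<lambda>_. bernoulli_pmf p))
           {r. u \<le> \<bar>\<Sum>i\<in>J. c i * (of_bool (r i) - p)\<bar>}
         \<le> 2 * exp (- l * u + l^2 * p * (\<Sum>i\<in>J. (c i)^2))"
proof -
  let ?M = "Pi_pmf I dflt (\<lambda>_. bernoulli_pmf p)"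
  let ?X = "\<lambda>c r. \<Sum>i\<in>J. c i * (of_bool (r i) - p)"
  have "{r. u \<le> \<bar>?X c r\<bar>} = {r. u \<le> ?X c r} \<union> {r. u \<le> ?X (\<lambda>i. - c i) r}"
    by (auto simp: sum_negf abs_le_iff)
  then have "measure_pmf.prob ?M {r. u \<le> \<bar>?X c r\<bar>}
      \<le> measure_pmf.prob ?M {r. u \<le> ?X c r} + measure_pmf.prob ?M {r. u \<le> ?X (\<lambda>i. - c i) r}"
    by (simp add: measure_Un_le)
  also have "\<dots> \<le> 2 * exp (- l * u + l^2 * p * (\<Sum>i\<in>J. (c i)^2))"
    using Pi_pmf_bernoulli_weighted_sum_tail[OF assms(1-6), of c dflt u]
      Pi_pmf_bernoulli_weighted_sum_tail[OF assms(1-6), of "\<lambda>i. - c i" dflt u] assms(7)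
    by simp
  finally show ?thesis .
qed

lemma chernoff_exponent_moderate_count:
  fixes L Q B p N :: real
  assumes L: "1 \<le> L" and Q: "0 < Q" "Q < B" and p: "p = 6000 * L^2 * B / Q^2"
    and N: "0 \<le> N" "N \<le> 50 * L * B"
  shows "\<exists>l. 0 < l \<and> l \<le> 1 \<and> - l * (p * (Q / 2)) + l^2 * p * N \<le> - 6 * L"
proof -
  define K where "K = 50 * L * B"
  define t where "t = Q / 2"
  have B0: "0 < B" using Q by simp
  have K0: "0 < K" using L B0 by (simp add: K_def)
  have p0: "0 < p" using L B0 Q by (simp add: p)
  have pt2: "p * t^2 = 1500 * L^2 * B" using Q by (simp add: p t_def power2_eq_square field_simps)
  show ?thesis
  proof (cases "t \<le> 2 * K")
    case True
    define l where "l = t / (2 * K)"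
    have l: "0 < l" "l \<le> 1" using True K0 Q by (auto simp: l_def t_def)
    have "- l * (p * t) + l^2 * p * N \<le> - l * (p * t) + l^2 * p * K"
      using N p0 by (simp add: K_def mult_left_mono)
    also have "\<dots> = - (p * t^2) / (4 * K)" using K0
      by (simp add: l_def power2_eq_square field_simps)
    also have "\<dots> = - (1500 * L^2 * B) / (200 * L * B)" by (simp add: pt2 K_def)
    also have "\<dots> = - 7.5 * L" using L B0 by (simp add: power2_eq_square field_simps)
    also have "\<dots> \<le> - 6 * L" using L by simp
    finally show ?thesis using l by (intro exI[of _ l]) (simp add: t_def)
  next
    case False
    have "- 1 * (p * t) + 1^2 * p * N \<le> - (p * t) + p * K"
      using N p0 by (simp add: K_def mult_left_mono)
    also have "\<dots> \<le> - (p * t) / 2"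
      using False p0 mult_left_mono[of K "t / 2" p] by linarith
    also have "\<dots> = - 1500 * L^2 * (B / Q)" using Q by (simp add: p t_def power2_eq_square field_simps)
    also have "\<dots> \<le> - 1500 * L^2" using Q mult_left_mono[of 1 "B / Q" "1500 * L^2"] by simp
    also have "\<dots> \<le> - 6 * L" using L by (simp add: power2_eq_square mult_le_cancel_left1)
    finally show ?thesis by (intro exI[of _ 1]) (simp add: t_def)
  qed
qed

lemma chernoff_exponent_large_count:
  fixes L Q B p N :: real
  assumes L: "1 \<le> L" and Q: "0 < Q" "Q < B" and p: "p = 6000 * L^2 * B / Q^2"
    and N: "50 * L * B < N"
  shows "- (1/4) * (p * N - (20 * L * p * B + 1)) + (1/4)^2 * p * N \<le> - 6 * L"
proof -
  have B0: "0 < B" using Q by simp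
  have p0: "0 < p" using L B0 Q by (simp add: p)
  have "1 \<le> B^2 / Q^2" using Q by (simp add: power_mono)
  then have "6000 * L^2 * 1 \<le> 6000 * L^2 * (B^2 / Q^2)" by (intro mult_left_mono) auto
  also have "\<dots> = p * B" by (simp add: p power2_eq_square)
  finally have pB: "6000 * L^2 \<le> p * B" by simp
  define X where "X = L * (p * B)"
  have "6000 * L^3 \<le> X"
    using L mult_left_mono[OF pB, of L] by (simp add: X_def power2_eq_square power3_eq_cube mult_ac)
  moreover have "L \<le> L^3"
    using L one_le_power[of L 2] mult_left_mono[of 1 "L^2" L] by (simp add: power3_eq_cube power2_eq_square)
  moreover have "50 * X \<le> p * N" using N p0 mult_strict_left_mono[OF N p0] by (simp add: X_def mult_ac)
  ultimately have "- 3 * (p * N) / 16 + (20 * X + 1) / 4 \<le> - 6 * L" using L by (simp add: field_simps)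
  moreover have "- (1/4) * (p * N - (20 * L * p * B + 1)) + (1/4)^2 * p * N
      = - 3 * (p * N) / 16 + (20 * X + 1) / 4"
    by (simp add: X_def field_simps power2_eq_square)
  ultimately show ?thesis by simp
qed

lemma Pi_pmf_bernoulli_count_below_threshold_prob:
  fixes c :: "'i \<Rightarrow> real" and L Q B p :: real
  assumes I: "finite I" "J \<subseteq> I" and c: "\<And>i. i \<in> J \<Longrightarrow> c i \<in> {-1, 0, 1}"
    and L: "1 \<le> L" and Q: "0 < Q" "Q < B" and p: "p = 6000 * L^2 * B / Q^2" "p \<le> 1"
    and N: "50 * L * B < (\<Sum>i\<in>J. (c i)^2)"
  shows "measure_pmf.prob (Pi_pmf I dflt (\<lambda>_. bernoulli_pmf p))
           {r. (\<Sum>i\<in>J. of_bool (c i \<noteq> 0 \<and> r i)) < 20 * L * p * B + 1}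
         \<le> exp (- 6 * L)"
    (is "measure_pmf.prob ?M ?E \<le> _")
proof -
  define N where "N = (\<Sum>i\<in>J. (c i)^2)"
  define u where "u = p * N - (20 * L * p * B + 1)"
  have p0: "0 \<le> p" using p(1) Q by simp
  have sq: "(c i)^2 = of_bool (c i \<noteq> 0)" if "i \<in> J" for i using c[OF that] by auto
  have "(\<Sum>i\<in>J. - ((c i)^2) * (of_bool (r i) - p)) = p * N - (\<Sum>i\<in>J. of_bool (c i \<noteq> 0 \<and> r i))" for r
    by (simp add: N_def algebra_simps sum_subtractf sum_distrib_left sq of_bool_conj cong: sum.cong)
  then have "?E \<subseteq> {r. u \<le> (\<Sum>i\<in>J. - ((c i)^2) * (of_bool (r i) - p))}"
    by (auto simp: u_def)
  then have "measure_pmf.prob ?M ?E \<le> measure_pmf.prob ?M {r. u \<le> (\<Sum>i\<in>J. - ((c i)^2) * (of_bool (r i) - p))}"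
    by (intro measure_pmf.finite_measure_mono) auto
  also have "\<dots> \<le> exp (- (1/4) * u + (1/4)^2 * p * (\<Sum>i\<in>J. (- ((c i)^2))^2))"
    by (rule Pi_pmf_bernoulli_weighted_sum_tail[OF I p0 p(2)]) (simp_all add: sq)
  also have "(\<Sum>i\<in>J. (- ((c i)^2))^2) = N"
    unfolding N_def by (intro sum.cong) (auto simp: sq)
  also have "exp (- (1/4) * u + (1/4)^2 * p * N) \<le> exp (- 6 * L)"
    using chernoff_exponent_large_count[OF L Q p(1)] N by (simp add: u_def N_def)
  finally show ?thesis .
qed

lemma Pi_pmf_bernoulli_deviation_with_bounded_count:
  fixes c :: "'i \<Rightarrow> real" and L Q B p :: real
  assumes I: "finite I" "J \<subseteq> I" and c: "\<And>i. i \<in> J \<Longrightarrow> c i \<in> {-1, 0, 1}"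
    and L: "1 \<le> L" and Q: "0 < Q" "Q < B" and p: "p = 6000 * L^2 * B / Q^2" "p \<le> 1"
  shows "measure_pmf.prob (Pi_pmf I dflt (\<lambda>_. bernoulli_pmf p))
           {r. (\<Sum>i\<in>J. of_bool (c i \<noteq> 0 \<and> r i)) < 20 * L * p * B + 1 \<and>
               p * (Q / 2) < \<bar>\<Sum>i\<in>J. c i * (of_bool (r i) - p)\<bar>}
         \<le> 2 * exp (- 6 * L)"
    (is "measure_pmf.prob ?M ?E \<le> _")
proof (cases "(\<Sum>i\<in>J. (c i)^2) \<le> 50 * L * B")
  case True
  have p0: "0 \<le> p" using p(1) Q by simp
  have c1: "\<bar>c i\<bar> \<le> 1" if "i \<in> J" for i using c[OF that] by auto
  obtain l where l: "0 < l" "l \<le> 1" "- l * (p * (Q / 2)) + l^2 * p * (\<Sum>i\<in>J. (c i)^2) \<le> - 6 * L"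
    using chernoff_exponent_moderate_count[OF L Q p(1) _ True] by (auto simp: sum_nonneg)
  have "measure_pmf.prob ?M ?E
      \<le> measure_pmf.prob ?M {r. p * (Q / 2) \<le> \<bar>\<Sum>i\<in>J. c i * (of_bool (r i) - p)\<bar>}"
    by (rule measure_pmf.finite_measure_mono) auto
  also have "\<dots> \<le> 2 * exp (- l * (p * (Q / 2)) + l^2 * p * (\<Sum>i\<in>J. (c i)^2))"
    by (rule Pi_pmf_bernoulli_weighted_sum_abs_tail[OF I p0 p(2) l(1,2) c1])
  also have "\<dots> \<le> 2 * exp (- 6 * L)" using l(3) by simp
  finally show ?thesis .
next
  case False
  have "measure_pmf.prob ?M ?E
      \<le> measure_pmf.prob ?M {r. (\<Sum>i\<in>J. of_bool (c i \<noteq> 0 \<and> r i)) < 20 * L * p * B + 1}"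
    by (rule measure_pmf.finite_measure_mono) auto
  also have "\<dots> \<le> exp (- 6 * L)"
    by (rule Pi_pmf_bernoulli_count_below_threshold_prob[OF I c L Q p]) (use False in \<open>simp_all add: not_le\<close>)
  also have "\<dots> \<le> 2 * exp (- 6 * L)" by simp
  finally show ?thesis .
qed

section \<open>The state of the algorithm\<close>

definition apr_threshold :: "real \<Rightarrow> real \<Rightarrow> nat \<Rightarrow> real" where
  "apr_threshold \<gamma> B n = 20 * log 2 (real n) * apr_p \<gamma> B n * B"

text \<open>The counter \<zeta>, continued as if sampling never stopped.\<close>
definition apr_count :: "int list \<Rightarrow> (nat \<Rightarrow> bool) \<Rightarrow> nat \<Rightarrow> real" where
  "apr_count a r j = (\<Sum>i<j. of_bool (a ! i \<noteq> 0 \<and> r i))"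

lemma apr_count_Suc: "apr_count a r (Suc j) = apr_count a r j + of_bool (a ! j \<noteq> 0 \<and> r j)"
  by (simp add: apr_count_def)

lemma mono_apr_count: "mono (apr_count a r)"
  unfolding apr_count_def by (intro monoI sum_mono2) auto

lemma apr_fold_state:
  assumes "foldl (\<lambda>st j. apr_step \<gamma> B n (a ! j) (r j) st) (0, 0, 0) [0..<j] = (\<Delta>, \<zeta>, \<Gamma>)"
  shows "\<Delta> = (\<Sum>i<j. if apr_count a r i < apr_threshold \<gamma> B n then of_int (a ! i) * of_bool (r i) else 0)
       \<and> \<Gamma> = (\<Sum>i<j. if apr_count a r i < apr_threshold \<gamma> B n then 0 else of_int (a ! i))
       \<and> (if apr_count a r j < apr_threshold \<gamma> B n then \<zeta> = apr_count a r j
          else apr_threshold \<gamma> B n \<le> \<zeta>)"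
  using assms
proof (induction j arbitrary: \<Delta> \<zeta> \<Gamma>)
  case 0
  then show ?case by (simp add: apr_count_def)
next
  case (Suc j)
  define T where "T = apr_threshold \<gamma> B n"
  obtain \<Delta>' \<zeta>' \<Gamma>' where prev: "foldl (\<lambda>st j. apr_step \<gamma> B n (a ! j) (r j) st) (0, 0, 0) [0..<j] = (\<Delta>', \<zeta>', \<Gamma>')"
    by (metis prod_cases3)
  note IH = Suc.IH[OF prev, folded T_def]
  have step: "apr_step \<gamma> B n (a ! j) (r j) (\<Delta>', \<zeta>', \<Gamma>') = (\<Delta>, \<zeta>, \<Gamma>)"
    using Suc.prems prev by simp
  show ?case
  proof (cases "apr_count a r j < T")
    case True
    with IH have "\<zeta>' = apr_count a r j" by simp
    with True step have "\<Delta> = \<Delta>' + of_int (a ! j) * of_bool (r j)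
        \<and> \<zeta> = \<zeta>' + of_bool (a ! j \<noteq> 0 \<and> r j) \<and> \<Gamma> = \<Gamma>'"
      by (cases "r j") (auto simp: apr_step_def apr_threshold_def T_def)
    with IH True show ?thesis by (auto simp: apr_count_Suc T_def)
  next
    case False
    with IH have "\<not> \<zeta>' < T" by simp
    with step have "\<Delta> = \<Delta>' \<and> \<zeta> = \<zeta>' \<and> \<Gamma> = \<Gamma>' + of_int (a ! j)"
      by (auto simp: apr_step_def apr_threshold_def T_def)
    moreover have "\<not> apr_count a r (Suc j) < T"
      using False monoD[OF mono_apr_count, of j "Suc j" a r] by simp
    ultimately show ?thesis using IH False by (auto simp: T_def)
  qed
qed

lemma abs_sum_list_le_length:
  fixes xs :: "'a::linordered_idom list"
  assumes "\<forall>x\<in>set xs. \<bar>x\<bar> \<le> 1"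
  shows "\<bar>sum_list xs\<bar> \<le> of_nat (length xs)"
  using assms
proof (induction xs)
  case (Cons x xs)
  then show ?case using abs_triangle_ineq[of x "sum_list xs"] by simp
qed simp

lemma abs_sum_list_stream_le:
  assumes "length a = n" "set a \<subseteq> {-1, 0, 1}"
  shows "\<bar>real_of_int (sum_list a)\<bar> \<le> real n"
proof -
  have "\<bar>sum_list a\<bar> \<le> int n" using assms by (intro abs_sum_list_le_length[of a, simplified assms(1)]) auto
  then show ?thesis by linarith
qed

lemma abs_clamp_diff_le:
  fixes u s m :: real
  assumes "\<bar>s\<bar> \<le> m"
  shows "\<bar>max (min u m) (- m) - s\<bar> \<le> \<bar>u - s\<bar>"
  using assms by linarith

lemma abs_apr_le: "\<bar>apr \<gamma> B n a r\<bar> \<le> real n"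
  by (auto simp: apr_def split: prod.splits)

lemma apr_error_le:
  assumes "length a = n" "set a \<subseteq> {-1, 0, 1}"
  shows "\<bar>apr \<gamma> B n a r - of_int (sum_list a)\<bar> \<le>
    \<bar>\<Sum>i<n. if apr_count a r i < apr_threshold \<gamma> B n
             then of_int (a ! i) * (of_bool (r i) / apr_p \<gamma> B n - 1) else 0\<bar>"
proof -
  define T where "T = apr_threshold \<gamma> B n"
  let ?p = "apr_p \<gamma> B n"
  obtain \<Delta> \<zeta> \<Gamma> where st: "apr_state \<gamma> B n a r = (\<Delta>, \<zeta>, \<Gamma>)" by (metis prod_cases3)
  note state = apr_fold_state[OF st[unfolded apr_state_def], folded T_def]
  have "real_of_int (sum_list a) = (\<Sum>i<n. real_of_int (a ! i))"
    using assms(1) by (simp add: sum_list_sum_nth atLeast0LessThan)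
  then have "\<Delta> / ?p + \<Gamma> - real_of_int (sum_list a) =
      (\<Sum>i<n. (if apr_count a r i < T then of_int (a ! i) * of_bool (r i) else 0) / ?p
              + (if apr_count a r i < T then 0 else of_int (a ! i)) - real_of_int (a ! i))"
    using state by (simp add: sum_divide_distrib sum.distrib sum_subtractf)
  also have "\<dots> = (\<Sum>i<n. if apr_count a r i < T then of_int (a ! i) * (of_bool (r i) / ?p - 1) else 0)"
    by (intro sum.cong) (auto simp: algebra_simps)
  finally have error: "\<Delta> / ?p + \<Gamma> - real_of_int (sum_list a) = \<dots>" .
  have "apr \<gamma> B n a r = max (min (\<Delta> / ?p + \<Gamma>) (real n)) (- real n)"
    by (simp add: apr_def st)
  then have "\<bar>apr \<gamma> B n a r - of_int (sum_list a)\<bar> \<le> \<bar>\<Delta> / ?p + \<Gamma> - real_of_int (sum_list a)\<bar>"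
    using abs_clamp_diff_le[OF abs_sum_list_stream_le[OF assms]] by simp
  then show ?thesis unfolding error T_def .
qed

section \<open>Probability of a large error\<close>

lemma below_threshold_prefix:
  fixes Z :: "nat \<Rightarrow> 'a::linorder"
  assumes "mono Z"
  shows "\<exists>k\<le>n. {i\<in>{..<n}. Z i < T} = {..<k}"
proof (cases "\<forall>i<n. Z i < T")
  case True
  then show ?thesis by (intro exI[of _ n]) auto
next
  case False
  define k where "k = (LEAST i. \<not> Z i < T)"
  from False obtain i0 where i0: "i0 < n" "\<not> Z i0 < T" by auto
  from i0(2) have "k \<le> i0" unfolding k_def by (rule Least_le)
  have below_iff: "Z i < T \<longleftrightarrow> i < k" for i
  proof
    assume "Z i < T"
    moreover have "\<not> Z k < T" unfolding k_def using i0(2) by (rule LeastI)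
    ultimately show "i < k" using monoD[OF assms, of k i] by (cases "k \<le> i") auto
  next
    assume "i < k"
    then show "Z i < T" unfolding k_def by (rule not_less_Least[THEN notnotD])
  qed
  have "{i\<in>{..<n}. Z i < T} = {..<k}" unfolding below_iff using \<open>k \<le> i0\<close> i0(1) by auto
  then show ?thesis using \<open>k \<le> i0\<close> i0(1) by (intro exI[of _ k]) simp
qed

lemma apr_large_error_subset:
  assumes "length a = n" "set a \<subseteq> {-1, 0, 1}" "0 < apr_p \<gamma> B n" "0 \<le> t"
  shows "{r. t < \<bar>apr \<gamma> B n a r - of_int (sum_list a)\<bar>} \<subseteq>
     (\<Union>k\<in>{1..n}. {r. apr_count a r k < apr_threshold \<gamma> B n + 1 \<and>
        apr_p \<gamma> B n * t < \<bar>\<Sum>i<k. of_int (a ! i) * (of_bool (r i) - apr_p \<gamma> B n)\<bar>})"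
proof
  fix r assume "r \<in> {r. t < \<bar>apr \<gamma> B n a r - of_int (sum_list a)\<bar>}"
  then have large: "t < \<bar>apr \<gamma> B n a r - of_int (sum_list a)\<bar>" by simp
  let ?p = "apr_p \<gamma> B n"
  define T where "T = apr_threshold \<gamma> B n"
  obtain k where k: "k \<le> n" "{i\<in>{..<n}. apr_count a r i < T} = {..<k}"
    using below_threshold_prefix[OF mono_apr_count] by blast
  define W where "W = (\<Sum>i<k. of_int (a ! i) * (of_bool (r i) - ?p))"
  have "(\<Sum>i<n. if apr_count a r i < T then of_int (a ! i) * (of_bool (r i) / ?p - 1) else 0)
      = (\<Sum>i\<in>{i\<in>{..<n}. apr_count a r i < T}. of_int (a ! i) * (of_bool (r i) / ?p - 1))"
    by (rule sum.inter_filter[symmetric]) simp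
  also have "\<dots> = W / ?p"
    using assms(3) unfolding k(2) W_def by (simp add: sum_divide_distrib field_simps)
  finally have "t < \<bar>W\<bar> / ?p"
    using large apr_error_le[OF assms(1,2), of \<gamma> B r] assms(3) by (simp add: T_def abs_divide)
  then have deviation: "?p * t < \<bar>W\<bar>" using assms(3) by (simp add: field_simps)
  have "k \<noteq> 0"
  proof
    assume "k = 0"
    then show False using deviation assms(3,4) by (simp add: W_def mult_less_0_iff)
  qed
  then have "k - 1 \<in> {i\<in>{..<n}. apr_count a r i < T}" using k(2) by simp
  then have "apr_count a r k < T + 1"
    using apr_count_Suc[of a r "k - 1"] \<open>k \<noteq> 0\<close> by simp
  then show "r \<in> (\<Union>k\<in>{1..n}. {r. apr_count a r k < apr_threshold \<gamma> B n + 1 \<and>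
        ?p * t < \<bar>\<Sum>i<k. of_int (a ! i) * (of_bool (r i) - ?p)\<bar>})"
    using k(1) \<open>k \<noteq> 0\<close> deviation by (auto simp: T_def W_def)
qed

lemma apr_eq_sum_list_if_apr_p_eq_1:
  assumes "apr_p \<gamma> B n = 1" "r \<in> set_pmf (apr_coins \<gamma> B n)"
    and "length a = n" "set a \<subseteq> {-1, 0, 1}"
  shows "apr \<gamma> B n a r = of_int (sum_list a)"
proof -
  have "False \<notin> set_pmf (bernoulli_pmf 1)" by (simp add: set_pmf_eq)
  then have "r i" if "i < n" for i
    using assms(2) that unfolding apr_coins_def assms(1) by (subst (asm) set_Pi_pmf) (auto simp: PiE_dflt_def)
  then have "(\<Sum>i<n. if apr_count a r i < apr_threshold \<gamma> B n
             then of_int (a ! i) * (of_bool (r i) / apr_p \<gamma> B n - 1) else (0::real)) = 0"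
    by (intro sum.neutral) (simp add: assms(1))
  then show ?thesis using apr_error_le[OF assms(3,4), of \<gamma> B r] by simp
qed

lemma real_times_exp_neg_6_log2_le:
  assumes "2 \<le> n"
  shows "real n * (2 * exp (- 6 * log 2 (real n))) \<le> 1 / real n ^ 3"
proof -
  have n: "2 \<le> real n" using assms by simp
  have "ln (real n) \<le> ln (real n) / ln 2"
    using n ln_2_less_1 by (simp add: divide_simps mult_left_le)
  then have "exp (- 6 * log 2 (real n)) \<le> exp (- (real 6 * ln (real n)))" by (simp add: log_def)
  also have "\<dots> = inverse (exp (ln (real n)) ^ 6)"
    by (simp only: exp_minus exp_of_nat_mult)
  also have "\<dots> = 1 / real n ^ 6" using n by (simp add: inverse_eq_divide)
  finally have "real n * (2 * exp (- 6 * log 2 (real n))) \<le> real n * (2 * (1 / real n ^ 6))"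
    using n by (intro mult_left_mono) auto
  also have "\<dots> = (2 * real n) / (real n ^ 3 * real n ^ 3)" by (simp flip: power_add)
  also have "\<dots> \<le> real n ^ 3 / (real n ^ 3 * real n ^ 3)"
  proof (rule divide_right_mono)
    have "2 * 1 \<le> real n * real n" using n mult_mono[OF n n] by simp
    then show "2 * real n \<le> real n ^ 3"
      using n mult_right_mono[of 2 "real n * real n" "real n"] by (simp add: power3_eq_cube)
  qed simp
  also have "\<dots> = 1 / real n ^ 3" using n by (subst nonzero_divide_mult_cancel_left) auto
  finally show ?thesis .
qed

lemma apr_large_error_prob_sampling:
  assumes n: "2 \<le> n" and \<gamma>: "4 / sqrt (real n) < \<gamma>" and B: "\<gamma> * sqrt (real n) < B"
    and p: "apr_p \<gamma> B n < 1" and a: "length a = n" "set a \<subseteq> {-1, 0, 1}"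
  shows "measure_pmf.prob (apr_coins \<gamma> B n)
           {r. \<gamma> / 2 * sqrt (real n) < \<bar>apr \<gamma> B n a r - of_int (sum_list a)\<bar>} \<le> 1 / real n ^ 3"
proof -
  define L where "L = log 2 (real n)"
  define Q where "Q = \<gamma> * sqrt (real n)"
  let ?p = "apr_p \<gamma> B n"
  let ?M = "apr_coins \<gamma> B n"
  define E where "E k = {r. apr_count a r k < apr_threshold \<gamma> B n + 1 \<and>
      ?p * (Q / 2) < \<bar>\<Sum>i<k. of_int (a ! i) * (of_bool (r i) - ?p)\<bar>}" for k
  have L: "1 \<le> L" using n by (simp add: L_def)
  have "0 < 4 / sqrt (real n)" using n by simp
  then have "0 < \<gamma>" using \<gamma> by linarith
  then have Q: "0 < Q" "Q < B" using n B by (simp_all add: Q_def)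
  have p_eq: "?p = 6000 * L^2 * B / Q^2"
    using p unfolding apr_p_def by (simp add: L_def Q_def power_mult_distrib min_def split: if_splits)
  have p_pos: "0 < ?p" using L Q by (simp add: p_eq)
  have "measure_pmf.prob ?M {r. Q / 2 < \<bar>apr \<gamma> B n a r - of_int (sum_list a)\<bar>}
      \<le> measure_pmf.prob ?M (\<Union>k\<in>{1..n}. E k)"
    using apr_large_error_subset[OF a p_pos, of "Q / 2"] Q
    by (intro measure_pmf.finite_measure_mono) (auto simp: E_def)
  also have "\<dots> \<le> (\<Sum>k\<in>{1..n}. measure_pmf.prob ?M (E k))"
    by (rule measure_pmf.finite_measure_subadditive_finite) auto
  also have "\<dots> \<le> (\<Sum>k\<in>{1..n}. 2 * exp (- 6 * L))"
  proof (rule sum_mono)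
    fix k assume "k \<in> {1..n}"
    then have "a ! i \<in> set a" if "i \<in> {..<k}" for i
      using that a(1) by (intro nth_mem) auto
    then have c: "real_of_int (a ! i) \<in> {-1, 0, 1}" if "i \<in> {..<k}" for i
      using that a(2) by force
    have E_k: "E k = {r. (\<Sum>i\<in>{..<k}. of_bool (real_of_int (a ! i) \<noteq> 0 \<and> r i)) < 20 * L * ?p * B + 1 \<and>
        ?p * (Q / 2) < \<bar>\<Sum>i\<in>{..<k}. real_of_int (a ! i) * (of_bool (r i) - ?p)\<bar>}"
      by (simp add: E_def apr_count_def apr_threshold_def L_def)
    show "measure_pmf.prob ?M (E k) \<le> 2 * exp (- 6 * L)"
      unfolding E_k apr_coins_def
      by (rule Pi_pmf_bernoulli_deviation_with_bounded_count[OF _ _ c L Q p_eq])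
        (use p \<open>k \<in> {1..n}\<close> in auto)
  qed
  also have "\<dots> = real n * (2 * exp (- 6 * L))" by simp
  also have "\<dots> \<le> 1 / real n ^ 3" unfolding L_def by (rule real_times_exp_neg_6_log2_le[OF n])
  finally show ?thesis by (simp add: Q_def)
qed

lemma apr_large_error_prob:
  assumes n: "1 \<le> n" and \<gamma>: "4 / sqrt (real n) < \<gamma>" and B: "\<gamma> * sqrt (real n) < B"
    and a: "length a = n" "set a \<subseteq> {-1, 0, 1}"
  shows "measure_pmf.prob (apr_coins \<gamma> B n)
           {r. \<gamma> / 2 * sqrt (real n) < \<bar>apr \<gamma> B n a r - of_int (sum_list a)\<bar>} \<le> 1 / real n ^ 3"
proof -
  consider "n = 1" | "2 \<le> n" "apr_p \<gamma> B n < 1" | "apr_p \<gamma> B n = 1"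
    using n by (fastforce simp: apr_p_def)
  then show ?thesis
  proof cases
    case 3
    have "0 < 4 / sqrt (real n)" using n by simp
    then have "0 < \<gamma>" using \<gamma> by linarith
    then have "0 \<le> \<gamma> / 2 * sqrt (real n)" by simp
    then have "measure_pmf.prob (apr_coins \<gamma> B n)
        {r. \<gamma> / 2 * sqrt (real n) < \<bar>apr \<gamma> B n a r - of_int (sum_list a)\<bar>} = 0"
      using apr_eq_sum_list_if_apr_p_eq_1[OF 3 _ a] by (subst measure_pmf_zero_iff) auto
    then show ?thesis by simp
  qed (use apr_large_error_prob_sampling[OF _ \<gamma> B _ a] in auto)
qed

section \<open>Mean square error\<close>

lemma measure_pmf_expectation_square_le:
  fixes f :: "'a \<Rightarrow> real"
  assumes bound: "\<And>x. x \<in> set_pmf M \<Longrightarrow> \<bar>f x\<bar> \<le> K" and "0 \<le> t"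
    and tail: "measure_pmf.prob M {x. t < \<bar>f x\<bar>} \<le> \<delta>"
  shows "measure_pmf.expectation M (\<lambda>x. (f x)^2) \<le> t^2 + K^2 * \<delta>"
proof -
  define A where "A = {x. t < \<bar>f x\<bar>}"
  have square_bound: "(f x)^2 \<le> K^2" if "x \<in> set_pmf M" for x
    using bound[OF that] by (metis abs_ge_zero power2_abs power_mono)
  have pointwise: "(f x)^2 \<le> t^2 + K^2 * indicator A x" if "x \<in> set_pmf M" for x
  proof (cases "x \<in> A")
    case True
    then show ?thesis using square_bound[OF that] by (simp add: add_increasing)
  next
    case False
    then have "\<bar>f x\<bar> \<le> t" by (simp add: A_def)
    then have "(f x)^2 \<le> t^2" using power_mono[of "\<bar>f x\<bar>" t 2] by simp
    then show ?thesis using False by simp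
  qed
  have integrable: "integrable M (\<lambda>x. (f x)^2)"
    using square_bound by (intro measure_pmf.integrable_const_bound[where B = "K^2"] AE_pmfI) auto
  have "measure_pmf.expectation M (\<lambda>x. (f x)^2) \<le> measure_pmf.expectation M (\<lambda>x. t^2 + K^2 * indicator A x)"
    using pointwise
    by (intro integral_mono_AE integrable AE_pmfI measure_pmf.integrable_const_bound[where B = "t^2 + K^2"])
      (auto simp: indicator_def)
  also have "\<dots> = t^2 + K^2 * measure_pmf.prob M A"
    using measure_pmf.integrable_const_bound[where M = M and f = "indicator A :: _ \<Rightarrow> real" and B = 1]
    by (subst Bochner_Integration.integral_add) (auto simp: abs_indicator)
  also have "\<dots> \<le> t^2 + K^2 * \<delta>" using tail by (simp add: A_def mult_left_mono)
  finally show ?thesis .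
qed

lemma measure_pmf_expectation_pair_pmf_le:
  fixes f :: "'a \<times> 'b \<Rightarrow> real"
  assumes nonneg: "\<And>x y. 0 \<le> f (x, y)"
    and integrable: "\<And>x. x \<in> set_pmf p \<Longrightarrow> integrable (measure_pmf q) (\<lambda>y. f (x, y))"
    and le: "\<And>x. x \<in> set_pmf p \<Longrightarrow> measure_pmf.expectation q (\<lambda>y. f (x, y)) \<le> c"
  shows "measure_pmf.expectation (pair_pmf p q) f \<le> c"
proof -
  obtain x where "x \<in> set_pmf p" using set_pmf_not_empty[of p] by blast
  then have "0 \<le> c" using le[of x] integral_nonneg_AE[of "\<lambda>y. f (x, y)" q] nonneg by fastforce
  have "(\<integral>\<^sup>+ z. ennreal (f z) \<partial>pair_pmf p q) = (\<integral>\<^sup>+ x. \<integral>\<^sup>+ y. ennreal (f (x, y)) \<partial>q \<partial>p)"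
    by (rule nn_integral_pair_pmf')
  also have "\<dots> \<le> (\<integral>\<^sup>+ x. ennreal c \<partial>p)"
  proof (intro nn_integral_mono_AE AE_pmfI)
    fix x assume x: "x \<in> set_pmf p"
    have "(\<integral>\<^sup>+ y. ennreal (f (x, y)) \<partial>q) = ennreal (measure_pmf.expectation q (\<lambda>y. f (x, y)))"
      using integrable[OF x] nonneg by (intro nn_integral_eq_integral) auto
    also have "\<dots> \<le> ennreal c" using le[OF x] by (rule ennreal_leI)
    finally show "(\<integral>\<^sup>+ y. ennreal (f (x, y)) \<partial>q) \<le> ennreal c" .
  qed
  also have "\<dots> = ennreal c" by (simp add: measure_pmf.emeasure_space_1)
  finally have "enn2real (\<integral>\<^sup>+ z. ennreal (f z) \<partial>pair_pmf p q) \<le> c"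
    using \<open>0 \<le> c\<close> by (intro enn2real_leI)
  moreover have "measure_pmf.expectation (pair_pmf p q) f = enn2real (\<integral>\<^sup>+ z. ennreal (f z) \<partial>pair_pmf p q)"
    by (rule integral_eq_nn_integral) (use nonneg in \<open>auto split: prod.splits\<close>)
  ultimately show ?thesis by simp
qed

lemma apr_mean_square_error_le:
  assumes n: "1 \<le> n" and \<gamma>: "4 / sqrt (real n) < \<gamma>" and B: "\<gamma> * sqrt (real n) < B"
    and a: "length a = n" "set a \<subseteq> {-1, 0, 1}"
  shows "measure_pmf.expectation (apr_coins \<gamma> B n) (\<lambda>r. (apr \<gamma> B n a r - of_int (sum_list a))^2)
           \<le> \<gamma>^2 * real n"
proof -
  have "0 < 4 / sqrt (real n)" using n by simp
  then have "4 < \<gamma> * sqrt (real n)" using \<gamma> n by (simp add: field_simps)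
  then have "4^2 < (\<gamma> * sqrt (real n))^2" by (intro power_strict_mono) auto
  then have sixteen_lt: "16 < \<gamma>^2 * real n" by (simp add: power_mult_distrib)
  have "0 < \<gamma>" using \<open>0 < 4 / sqrt (real n)\<close> \<gamma> by linarith
  then have "0 \<le> \<gamma> / 2 * sqrt (real n)" by simp
  moreover have "\<bar>apr \<gamma> B n a r - of_int (sum_list a)\<bar> \<le> 2 * real n" for r
    using abs_apr_le[of \<gamma> B n a r] abs_sum_list_stream_le[OF a] by linarith
  ultimately have "measure_pmf.expectation (apr_coins \<gamma> B n) (\<lambda>r. (apr \<gamma> B n a r - of_int (sum_list a))^2)
      \<le> (\<gamma> / 2 * sqrt (real n))^2 + (2 * real n)^2 * (1 / real n ^ 3)"
    by (intro measure_pmf_expectation_square_le apr_large_error_prob[OF assms])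
  also have "\<dots> = \<gamma>^2 * real n / 4 + 4 / real n"
    using n by (simp add: power_mult_distrib power2_eq_square power3_eq_cube field_simps)
  also have "\<dots> \<le> \<gamma>^2 * real n"
  proof -
    have "4 / real n \<le> 4" using n by (simp add: divide_le_eq)
    then show ?thesis using sixteen_lt by linarith
  qed
  finally show ?thesis .
qed

lemma finite_set_pmf_apr_coins: "finite (set_pmf (apr_coins \<gamma> B n))"
  unfolding apr_coins_def by (rule finite_set_pmf_Pi_pmf_bool) simp

theorem proposition4p6:
  fixes n :: nat and \<gamma> B :: real
  assumes "n \<ge> 1" and "\<gamma> > 4 / sqrt (real n)" and "B > \<gamma> * sqrt (real n)"
  shows "(\<forall>a :: int list. length a = n \<and> set a \<subseteq> {-1, 0, 1} \<longrightarrow>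
            measure_pmf.prob (apr_coins \<gamma> B n)
              {r. \<bar>apr \<gamma> B n a r - real_of_int (sum_list a)\<bar> \<le> \<gamma> / 2 * sqrt (real n)}
            \<ge> 1 - 1 / (real n)^3)
       \<and> (\<forall>D :: int list pmf. set_pmf D \<subseteq> {a. length a = n \<and> set a \<subseteq> {-1, 0, 1}} \<longrightarrow>
            measure_pmf.expectation (pair_pmf D (apr_coins \<gamma> B n))
              (\<lambda>(a, r). (apr \<gamma> B n a r - real_of_int (sum_list a))^2)
            \<le> \<gamma>^2 * real n)"
proof (intro conjI allI impI)
  fix a :: "int list"
  assume "length a = n \<and> set a \<subseteq> {-1, 0, 1}"
  then have tail: "measure_pmf.prob (apr_coins \<gamma> B n)
      {r. \<gamma> / 2 * sqrt (real n) < \<bar>apr \<gamma> B n a r - of_int (sum_list a)\<bar>} \<le> 1 / real n ^ 3"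
    using apr_large_error_prob[OF assms] by blast
  then show "1 - 1 / (real n)^3 \<le> measure_pmf.prob (apr_coins \<gamma> B n)
      {r. \<bar>apr \<gamma> B n a r - of_int (sum_list a)\<bar> \<le> \<gamma> / 2 * sqrt (real n)}"
    using measure_pmf.prob_neg[where M = "apr_coins \<gamma> B n"
        and P = "\<lambda>r. \<gamma> / 2 * sqrt (real n) < \<bar>apr \<gamma> B n a r - of_int (sum_list a)\<bar>"]
    by (simp add: not_less)
next
  fix D :: "int list pmf"
  assume "set_pmf D \<subseteq> {a. length a = n \<and> set a \<subseteq> {-1, 0, 1}}"
  then show "measure_pmf.expectation (pair_pmf D (apr_coins \<gamma> B n))
      (\<lambda>(a, r). (apr \<gamma> B n a r - of_int (sum_list a))^2) \<le> \<gamma>^2 * real n"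
    using apr_mean_square_error_le[OF assms]
    by (intro measure_pmf_expectation_pair_pmf_le)
      (auto intro: integrable_measure_pmf_finite finite_set_pmf_apr_coins)
qed

end
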